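(* Let $n\ge 2$ be an integer and let $(x_0,y_0),\dots,(x_n,y_n)\in\mathbb{R}^2$ with $a:=x_0<x_1<\dots<x_n=:b$. For each $k\in\{1,\dots,n\}$ fix $d_k\in[0,1)$ and put \[ a_k=\frac{x_k-x_{k-1}}{x_n-x_0},\quad b_k=\frac{x_nx_{k-1}-x_0x_k}{x_n-x_0},\quad c_k=\frac{y_k-y_{k-1}}{x_n-x_0}-d_k\frac{y_n-y_0}{x_n-x_0},\quad e_k=\frac{x_ny_{k-1}-x_0y_k}{x_n-x_0}-d_k\frac{x_ny_0-x_0y_n}{x_n-x_0}, \] and $f_k(x,y)=(a_kx+b_k,\;c_kx+d_ky+e_k)$ for $(x,y)\in\mathbb{R}^2$. Let $\theta=1$ if $c_1=\dots=c_n=0$ and $\theta=\dfrac{1-\max_k a_k}{2\max_k|c_k|}$ otherwise. Let $f:[a,b]\to\mathbb{R}$ be the affine fractal interpolation function associated with these data, and $G_f=\{(x,f(x)):x\in[a,b]\}$ its graph. For $k\in\{1,\dots,n\}$ set \[ \gamma_k=\left(\frac{b_k}{1-a_k},\ \frac{b_kc_k}{(1-a_k)(1-d_k)}+\frac{e_k}{1-d_k}\right),\qquad s_k=\max\{a_k+\theta|c_k|,\,d_k\}, \] and \[ M=\max_{i,j\in\{1,\dots,n\}}\left\{\left|\frac{b_i}{1-a_i}-\frac{b_j}{1-a_j}\right|+\theta\left|\frac{c_ib_i}{(1-a_i)(1-d_i)}+\frac{e_i}{1-d_i}-\frac{c_jb_j}{(1-a_j)(1-d_j)}-\frac{e_j}{1-d_j}\right|\right\}.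 \] Let $\sigma$ be a permutation of $\{1,\dots,n\}$ with $s_{\sigma(1)}\le s_{\sigma(2)}\le\dots\le s_{\sigma(n)}$. Then \[ G_f\subseteq\left(\bigcup_{j=1}^{n-1}R\!\left[\gamma_{\sigma(j)},\,Ms_{\sigma(j)}\frac{1+s_{\sigma(n)}}{1-s_{\sigma(n-1)}s_{\sigma(n)}}\right]\right)\cup R\!\left[\gamma_{\sigma(n)},\,Ms_{\sigma(n)}\frac{1+s_{\sigma(n-1)}}{1-s_{\sigma(n-1)}s_{\sigma(n)}}\right]. \]
   Context: For $(x,y)\in\mathbb{R}^2$ and $r\ge0$, $R[(x,y),r]=\{(u,v)\in\mathbb{R}^2: |x-u|+\theta|y-v|\le r\}$ (the closed ball of radius $r$ for the metric $\rho((u_1,v_1),(u_2,v_2))=|u_1-u_2|+\theta|v_1-v_2|$; it is the filled rhombus with vertices $(x\pm r,y)$, $(x,y\pm r/\theta)$). The maps $f_k$ are contractions for $\rho$, and the attractor of the iterated function system $\{f_1,\dots,f_n\}$ is the unique nonempty compact set $K\subseteq\mathbb{R}^2$ with $K=\bigcup_{k=1}^n f_k(K)$. The affine fractal interpolation function is the continuous function $f:[a,b]\to\mathbb{R}$ with $f(x_k)=y_k$ for all $k\in\{0,\dots,n\}$ whose graph $G_f$ equals this attractor. Note $\gamma_k$ is the unique fixed point of $f_k$ and $s_k$ is the Lipschitz constant of $f_k$ with respect to $\rho$. *)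

theory Defs
  imports "HOL-Analysis.Analysis"
begin

definition fia :: "nat \<Rightarrow> (nat \<Rightarrow> real) \<Rightarrow> nat \<Rightarrow> real" where
  "fia n x k = (x k - x (k-1)) / (x n - x 0)"

definition fib :: "nat \<Rightarrow> (nat \<Rightarrow> real) \<Rightarrow> nat \<Rightarrow> real" where
  "fib n x k = (x n * x (k-1) - x 0 * x k) / (x n - x 0)"

definition fic :: "nat \<Rightarrow> (nat \<Rightarrow> real) \<Rightarrow> (nat \<Rightarrow> real) \<Rightarrow> (nat \<Rightarrow> real) \<Rightarrow> nat \<Rightarrow> real" where
  "fic n x y d k = (y k - y (k-1)) / (x n - x 0) - d k * (y n - y 0) / (x n - x 0)"

definition fie :: "nat \<Rightarrow> (nat \<Rightarrow> real) \<Rightarrow> (nat \<Rightarrow> real) \<Rightarrow> (nat \<Rightarrow> real) \<Rightarrow> nat \<Rightarrow> real" where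
  "fie n x y d k = (x n * y (k-1) - x 0 * y k) / (x n - x 0)
                   - d k * (x n * y 0 - x 0 * y n) / (x n - x 0)"

definition fimap :: "nat \<Rightarrow> (nat \<Rightarrow> real) \<Rightarrow> (nat \<Rightarrow> real) \<Rightarrow> (nat \<Rightarrow> real) \<Rightarrow> nat
    \<Rightarrow> real \<times> real \<Rightarrow> real \<times> real" where
  "fimap n x y d k p = (fia n x k * fst p + fib n x k,
                        fic n x y d k * fst p + d k * snd p + fie n x y d k)"

definition fitheta :: "nat \<Rightarrow> (nat \<Rightarrow> real) \<Rightarrow> (nat \<Rightarrow> real) \<Rightarrow> (nat \<Rightarrow> real) \<Rightarrow> real" where
  "fitheta n x y d =
     (if (\<forall>k\<in>{1..n}. fic n x y d k = 0) then 1
      else (1 - Max (fia n x ` {1..n})) / (2 * Max ((\<lambda>k. \<bar>fic n x y d k\<bar>) ` {1..n})))"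

definition rball :: "real \<Rightarrow> real \<times> real \<Rightarrow> real \<Rightarrow> (real \<times> real) set" where
  "rball \<theta> p r = {q. \<bar>fst p - fst q\<bar> + \<theta> * \<bar>snd p - snd q\<bar> \<le> r}"

definition figamma :: "nat \<Rightarrow> (nat \<Rightarrow> real) \<Rightarrow> (nat \<Rightarrow> real) \<Rightarrow> (nat \<Rightarrow> real) \<Rightarrow> nat \<Rightarrow> real \<times> real" where
  "figamma n x y d k =
     (fib n x k / (1 - fia n x k),
      fib n x k * fic n x y d k / ((1 - fia n x k) * (1 - d k)) + fie n x y d k / (1 - d k))"

definition fis :: "nat \<Rightarrow> (nat \<Rightarrow> real) \<Rightarrow> (nat \<Rightarrow> real) \<Rightarrow> (nat \<Rightarrow> real) \<Rightarrow> nat \<Rightarrow> real" where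
  "fis n x y d k = max (fia n x k + fitheta n x y d * \<bar>fic n x y d k\<bar>) (d k)"

definition fiM :: "nat \<Rightarrow> (nat \<Rightarrow> real) \<Rightarrow> (nat \<Rightarrow> real) \<Rightarrow> (nat \<Rightarrow> real) \<Rightarrow> real" where
  "fiM n x y d = Max ((\<lambda>(i,j).
      \<bar>fib n x i / (1 - fia n x i) - fib n x j / (1 - fia n x j)\<bar>
      + fitheta n x y d *
        \<bar>fic n x y d i * fib n x i / ((1 - fia n x i) * (1 - d i)) + fie n x y d i / (1 - d i)
         - fic n x y d j * fib n x j / ((1 - fia n x j) * (1 - d j)) - fie n x y d j / (1 - d j)\<bar>)
      ` ({1..n} \<times> {1..n}))"

end

theory Submission
  imports Defs
begin

(* Let r_i be the largest rho-distance from the fixed point gamma_i to a point of the graph K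
   (attained, K being compact). Every point of K = U f_k(K) lies within s_k r_k of some gamma_k,
   so the triangle inequality through gamma_k gives r_i <= M + s_k r_k for some k ~= i, unless
   r_i = 0. With S >= S' the two largest contraction constants, X the radius around the fixed
   point of the map with constant S and Y the largest of the other radii, this yields
   X <= M + S' Y and Y <= M + max (S X) (S' Y), whence Y <= M (1 + S) / (1 - S' S) and
   X <= M (1 + S') / (1 - S' S). Applying f_k once more shrinks these radii by the factor s_k. *)

lemma coupled_linear_bound:
  fixes X Y M S S' :: real
  assumes X: "X \<le> M + S' * Y"
    and Y: "Y \<le> M + S * X \<or> Y \<le> M + S' * Y"
    and M_nonneg: "0 \<le> M" and S'_nonneg: "0 \<le> S'" and S'_le_S: "S' \<le> S" and S_less_1: "S < 1"
  shows "Y \<le> M * (1 + S) / (1 - S' * S) \<and> X \<le> M * (1 + S') / (1 - S' * S)"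
proof -
  have "S' * S \<le> 1 * S"
    using S'_nonneg S'_le_S S_less_1 by (intro mult_right_mono) auto
  then have denom_pos: "0 < 1 - S' * S"
    using S_less_1 by simp
  from Y show ?thesis
  proof
    assume "Y \<le> M + S * X"
    moreover have "S * X \<le> S * (M + S' * Y)"
      using X S'_nonneg S'_le_S by (intro mult_left_mono) auto
    ultimately have "Y * (1 - S' * S) \<le> M * (1 + S)"
      by (simp add: algebra_simps)
    then have Y_bound: "Y \<le> M * (1 + S) / (1 - S' * S)"
      using denom_pos by (simp add: pos_le_divide_eq)
    have "S' * Y \<le> S' * (M * (1 + S) / (1 - S' * S))"
      using Y_bound S'_nonneg by (rule mult_left_mono)
    then have "X \<le> M + S' * (M * (1 + S) / (1 - S' * S))"
      using X by linarith
    also have "\<dots> = M * (1 + S') / (1 - S' * S)"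
      using denom_pos by (simp add: field_simps)
    finally show ?thesis using Y_bound by simp
  next
    assume "Y \<le> M + S' * Y"
    then have "Y * (1 - S') \<le> M"
      by (simp add: algebra_simps)
    moreover have "0 < 1 - S'"
      using S'_le_S S_less_1 by simp
    ultimately have Y_bound: "Y \<le> M / (1 - S')"
      by (simp add: pos_le_divide_eq)
    have "S' * Y \<le> S' * (M / (1 - S'))"
      using Y_bound S'_nonneg by (rule mult_left_mono)
    then have "X \<le> M + S' * (M / (1 - S'))"
      using X by linarith
    also have "\<dots> = M / (1 - S')"
      using \<open>0 < 1 - S'\<close> by (simp add: field_simps)
    finally have X_bound: "X \<le> M / (1 - S')" .
    have "1 - S' * S \<le> (1 + S') * (1 - S')" "1 - S' * S \<le> (1 + S) * (1 - S')"
      using S'_nonneg S'_le_S by (auto simp: algebra_simps intro: mult_right_mono)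
    then have "M * (1 - S' * S) \<le> M * (1 + S') * (1 - S')"
      "M * (1 - S' * S) \<le> M * (1 + S) * (1 - S')"
      using M_nonneg by (simp_all add: mult.assoc mult_left_mono)
    then have "M / (1 - S') \<le> M * (1 + S') / (1 - S' * S)"
      "M / (1 - S') \<le> M * (1 + S) / (1 - S' * S)"
      using denom_pos \<open>0 < 1 - S'\<close> by (simp_all add: divide_simps)
    then show ?thesis
      using X_bound Y_bound by linarith
  qed
qed

lemma contraction_radii_bound:
  fixes r s :: "'i \<Rightarrow> real"
  assumes fin: "finite I" and tp: "tp \<in> I" and others: "I - {tp} \<noteq> {}"
    and r_nonneg: "\<forall>i\<in>I. 0 \<le> r i" and s_nonneg: "\<forall>k\<in>I. 0 \<le> s k"
    and s_tp: "s tp \<le> S" and s_others: "\<forall>k\<in>I - {tp}. s k \<le> S'"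
    and S'_le_S: "S' \<le> S" and S_less_1: "S < 1" and M_nonneg: "0 \<le> M"
    and recursion: "\<forall>i\<in>I. r i \<le> 0 \<or> (\<exists>k\<in>I - {i}. r i \<le> M + s k * r k)"
  shows "r tp \<le> M * (1 + S') / (1 - S' * S) \<and> (\<forall>i\<in>I - {tp}. r i \<le> M * (1 + S) / (1 - S' * S))"
proof -
  define Y where "Y = Max (r ` (I - {tp}))"
  have Y_ge: "r k \<le> Y" if "k \<in> I - {tp}" for k
    unfolding Y_def using fin that by (intro Max_ge) auto
  have "Y \<in> r ` (I - {tp})"
    unfolding Y_def using fin others by (intro Max_in) auto
  then obtain i where i: "i \<in> I - {tp}" "Y = r i" by blast
  have "0 \<le> s i" "s i \<le> S'"
    using i s_nonneg s_others by auto
  then have "0 \<le> S'" by linarith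
  have "0 \<le> Y"
    using i r_nonneg by auto
  then have "0 \<le> M + S' * Y"
    using M_nonneg \<open>0 \<le> S'\<close> by simp
  have other_term: "s k * r k \<le> S' * Y" if "k \<in> I - {tp}" for k
    using that s_nonneg r_nonneg s_others Y_ge \<open>0 \<le> S'\<close> by (intro mult_mono) auto
  have X: "r tp \<le> M + S' * Y"
  proof -
    consider "r tp \<le> 0" | k where "k \<in> I - {tp}" "r tp \<le> M + s k * r k"
      using recursion tp by blast
    then show ?thesis
    proof cases
      case 1
      then show ?thesis using \<open>0 \<le> M + S' * Y\<close> by linarith
    next
      case 2
      then show ?thesis using other_term[of k] by linarith
    qed
  qed
  have Y: "Y \<le> M + S * r tp \<or> Y \<le> M + S' * Y"
  proof -
    consider "r i \<le> 0" | "r i \<le> M + s tp * r tp"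
      | k where "k \<in> I - {tp}" "r i \<le> M + s k * r k"
      using recursion i by blast
    then show ?thesis
    proof cases
      case 1
      then show ?thesis using i \<open>0 \<le> M + S' * Y\<close> by linarith
    next
      case 2
      moreover have "s tp * r tp \<le> S * r tp"
        using s_tp r_nonneg tp by (simp add: mult_right_mono)
      ultimately show ?thesis using i by linarith
    next
      case 3
      then show ?thesis using i other_term[of k] by linarith
    qed
  qed
  show ?thesis
    using coupled_linear_bound[OF X Y M_nonneg \<open>0 \<le> S'\<close> S'_le_S S_less_1] Y_ge by force
qed

lemma attractor_point_near_fixpoint:
  fixes \<rho> :: "'a \<Rightarrow> 'a \<Rightarrow> real"
  assumes attractor: "K = (\<Union>k\<in>I. F k ` K)" and "p \<in> K"
    and lipschitz: "\<forall>k\<in>I. \<forall>u v. \<rho> (F k u) (F k v) \<le> s k * \<rho> u v"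
    and fixpoint: "\<forall>k\<in>I. F k (\<gamma> k) = \<gamma> k"
    and radius: "\<forall>k\<in>I. \<forall>q\<in>K. \<rho> (\<gamma> k) q \<le> r k"
    and s_nonneg: "\<forall>k\<in>I. 0 \<le> s k"
  shows "\<exists>k\<in>I. \<rho> (\<gamma> k) p \<le> s k * r k"
proof -
  obtain k q where k: "k \<in> I" "q \<in> K" "p = F k q"
    using assms(1,2) by blast
  then have "\<rho> (\<gamma> k) p = \<rho> (F k (\<gamma> k)) (F k q)"
    using fixpoint by simp
  also have "\<dots> \<le> s k * \<rho> (\<gamma> k) q"
    using lipschitz k by blast
  also have "\<dots> \<le> s k * r k"
    using radius s_nonneg k by (intro mult_left_mono) auto
  finally show ?thesis using k by blast
qed

lemma attractor_radius_recursion: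
  fixes \<rho> :: "'a \<Rightarrow> 'a \<Rightarrow> real"
  assumes attractor: "K = (\<Union>k\<in>I. F k ` K)" and "i \<in> I" "p \<in> K" and r_i: "r i = \<rho> (\<gamma> i) p"
    and lipschitz: "\<forall>k\<in>I. \<forall>u v. \<rho> (F k u) (F k v) \<le> s k * \<rho> u v"
    and fixpoint: "\<forall>k\<in>I. F k (\<gamma> k) = \<gamma> k"
    and radius: "\<forall>k\<in>I. \<forall>q\<in>K. \<rho> (\<gamma> k) q \<le> r k"
    and s_nonneg: "\<forall>k\<in>I. 0 \<le> s k" and s_less_1: "\<forall>k\<in>I. s k < 1"
    and \<rho>_refl: "\<forall>u. \<rho> u u = 0" and \<rho>_triangle: "\<forall>u v w. \<rho> u w \<le> \<rho> u v + \<rho> v w"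
    and M: "\<forall>i\<in>I. \<forall>j\<in>I. \<rho> (\<gamma> i) (\<gamma> j) \<le> M"
  shows "r i \<le> 0 \<or> (\<exists>k\<in>I - {i}. r i \<le> M + s k * r k)"
proof -
  obtain k where k: "k \<in> I" "\<rho> (\<gamma> k) p \<le> s k * r k"
    using attractor_point_near_fixpoint[OF attractor \<open>p \<in> K\<close> lipschitz fixpoint radius s_nonneg]
    by blast
  have r_i_le: "r i \<le> \<rho> (\<gamma> i) (\<gamma> k) + s k * r k"
    using \<rho>_triangle[rule_format, where u = "\<gamma> i" and v = "\<gamma> k" and w = p] k(2)
    unfolding r_i by linarith
  show ?thesis
  proof (cases "k = i")
    case True
    then have "(1 - s i) * r i \<le> 0"
      using r_i_le \<rho>_refl by (simp add: algebra_simps)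
    moreover have "s i < 1"
      using s_less_1 \<open>i \<in> I\<close> by blast
    ultimately show ?thesis by (auto simp: mult_le_0_iff)
  next
    case False
    then show ?thesis using r_i_le M \<open>i \<in> I\<close> k by force
  qed
qed

lemma attractor_subset_fixpoint_balls:
  fixes \<rho> :: "'a \<Rightarrow> 'a \<Rightarrow> real" and F :: "'i \<Rightarrow> 'a \<Rightarrow> 'a"
  assumes fin: "finite I" and tp: "tp \<in> I" and others: "I - {tp} \<noteq> {}"
    and attractor: "K = (\<Union>k\<in>I. F k ` K)"
    and lipschitz: "\<forall>k\<in>I. \<forall>u v. \<rho> (F k u) (F k v) \<le> s k * \<rho> u v"
    and fixpoint: "\<forall>k\<in>I. F k (\<gamma> k) = \<gamma> k"
    and \<rho>_nonneg: "\<forall>u v. 0 \<le> \<rho> u v" and \<rho>_refl: "\<forall>u. \<rho> u u = 0"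
    and \<rho>_triangle: "\<forall>u v w. \<rho> u w \<le> \<rho> u v + \<rho> v w"
    and M: "\<forall>i\<in>I. \<forall>j\<in>I. \<rho> (\<gamma> i) (\<gamma> j) \<le> M"
    and s_nonneg: "\<forall>k\<in>I. 0 \<le> s k" and s_tp: "s tp \<le> S" and s_others: "\<forall>k\<in>I - {tp}. s k \<le> S'"
    and S'_le_S: "S' \<le> S" and S_less_1: "S < 1"
    and farthest: "\<forall>i\<in>I. \<exists>p\<in>K. \<forall>q\<in>K. \<rho> (\<gamma> i) q \<le> \<rho> (\<gamma> i) p"
  shows "K \<subseteq> (\<Union>i\<in>I - {tp}. {q. \<rho> (\<gamma> i) q \<le> M * s i * (1 + S) / (1 - S' * S)})
              \<union> {q. \<rho> (\<gamma> tp) q \<le> M * s tp * (1 + S') / (1 - S' * S)}"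
proof -
  obtain far where far: "\<forall>i\<in>I. far i \<in> K \<and> (\<forall>q\<in>K. \<rho> (\<gamma> i) q \<le> \<rho> (\<gamma> i) (far i))"
    using farthest by metis
  define r where "r i = \<rho> (\<gamma> i) (far i)" for i
  have radius: "\<forall>k\<in>I. \<forall>q\<in>K. \<rho> (\<gamma> k) q \<le> r k"
    using far r_def by auto
  have s_less_1: "\<forall>k\<in>I. s k < 1"
    using s_tp s_others S'_le_S S_less_1 by force
  have "0 \<le> M"
    using M \<rho>_nonneg tp by (meson order.trans)
  have recursion: "\<forall>i\<in>I. r i \<le> 0 \<or> (\<exists>k\<in>I - {i}. r i \<le> M + s k * r k)"
  proof
    fix i assume i: "i \<in> I"
    then have "far i \<in> K"
      using far by blast
    show "r i \<le> 0 \<or> (\<exists>k\<in>I - {i}. r i \<le> M + s k * r k)"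
      by (rule attractor_radius_recursion[OF attractor i \<open>far i \<in> K\<close> r_def lipschitz fixpoint
            radius s_nonneg s_less_1 \<rho>_refl \<rho>_triangle M])
  qed
  have "\<forall>i\<in>I. 0 \<le> r i"
    using \<rho>_nonneg r_def by simp
  note bounds = contraction_radii_bound[OF fin tp others this s_nonneg s_tp s_others S'_le_S S_less_1
      \<open>0 \<le> M\<close> recursion]
  show ?thesis
  proof
    fix p assume "p \<in> K"
    then obtain k where k: "k \<in> I" "\<rho> (\<gamma> k) p \<le> s k * r k"
      using attractor_point_near_fixpoint[OF attractor _ lipschitz fixpoint radius s_nonneg] by blast
    show "p \<in> (\<Union>i\<in>I - {tp}. {q. \<rho> (\<gamma> i) q \<le> M * s i * (1 + S) / (1 - S' * S)})
              \<union> {q. \<rho> (\<gamma> tp) q \<le> M * s tp * (1 + S') / (1 - S' * S)}"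
    proof (cases "k = tp")
      case True
      have "\<rho> (\<gamma> tp) p \<le> s tp * r tp" using k True by simp
      also have "\<dots> \<le> s tp * (M * (1 + S') / (1 - S' * S))"
        using bounds s_nonneg tp by (intro mult_left_mono) auto
      finally show ?thesis by (simp add: ac_simps)
    next
      case False
      have "\<rho> (\<gamma> k) p \<le> s k * r k" using k by simp
      also have "\<dots> \<le> s k * (M * (1 + S) / (1 - S' * S))"
        using bounds s_nonneg k False by (intro mult_left_mono) auto
      finally show ?thesis using k False by (auto simp: ac_simps)
    qed
  qed
qed

definition wdist :: "real \<Rightarrow> real \<times> real \<Rightarrow> real \<times> real \<Rightarrow> real" where
  "wdist \<theta> p q = \<bar>fst p - fst q\<bar> + \<theta> * \<bar>snd p - snd q\<bar>"

lemma rball_eq_wdist: "rball \<theta> p r = {q. wdist \<theta> p q \<le> r}"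
  by (simp add: rball_def wdist_def)

lemma wdist_self [simp]: "wdist \<theta> p p = 0"
  by (simp add: wdist_def)

lemma wdist_nonneg: "0 \<le> \<theta> \<Longrightarrow> 0 \<le> wdist \<theta> p q"
  by (simp add: wdist_def)

lemma wdist_triangle:
  assumes "0 \<le> \<theta>"
  shows "wdist \<theta> p r \<le> wdist \<theta> p q + wdist \<theta> q r"
proof -
  have "\<theta> * \<bar>snd p - snd r\<bar> \<le> \<theta> * (\<bar>snd p - snd q\<bar> + \<bar>snd q - snd r\<bar>)"
    using assms by (intro mult_left_mono) auto
  then show ?thesis
    unfolding wdist_def by (simp add: distrib_left)
qed

lemma fimap_lipschitz:
  assumes "0 \<le> fia n x k" "0 \<le> \<theta>" "0 \<le> d k"
  shows "wdist \<theta> (fimap n x y d k p) (fimap n x y d k q)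
           \<le> max (fia n x k + \<theta> * \<bar>fic n x y d k\<bar>) (d k) * wdist \<theta> p q"
proof -
  define a c m where "a = fia n x k" and "c = fic n x y d k" and "m = max (a + \<theta> * \<bar>c\<bar>) (d k)"
  define u v where "u = fst p - fst q" and "v = snd p - snd q"
  have "fst (fimap n x y d k p) - fst (fimap n x y d k q) = a * u"
    "snd (fimap n x y d k p) - snd (fimap n x y d k q) = c * u + d k * v"
    unfolding fimap_def a_def c_def u_def v_def by (simp_all add: algebra_simps)
  then have "wdist \<theta> (fimap n x y d k p) (fimap n x y d k q) = a * \<bar>u\<bar> + \<theta> * \<bar>c * u + d k * v\<bar>"
    unfolding wdist_def using assms(1) a_def by (simp add: abs_mult)
  also have "\<dots> \<le> a * \<bar>u\<bar> + \<theta> * (\<bar>c\<bar> * \<bar>u\<bar> + d k * \<bar>v\<bar>)"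
    using assms(2,3) abs_triangle_ineq[of "c * u" "d k * v"]
    by (intro add_left_mono mult_left_mono) (auto simp: abs_mult)
  also have "\<dots> = (a + \<theta> * \<bar>c\<bar>) * \<bar>u\<bar> + d k * (\<theta> * \<bar>v\<bar>)"
    by (simp add: algebra_simps)
  also have "\<dots> \<le> m * \<bar>u\<bar> + m * (\<theta> * \<bar>v\<bar>)"
    unfolding m_def using assms(2) by (intro add_mono mult_right_mono) auto
  also have "\<dots> = m * wdist \<theta> p q"
    unfolding wdist_def u_def v_def by (simp add: distrib_left)
  finally show ?thesis unfolding m_def a_def c_def .
qed

lemma affine_fixpoint:
  fixes a b c \<delta> e :: real
  assumes "a \<noteq> 1" "\<delta> \<noteq> 1"
  defines "u \<equiv> b / (1 - a)" and "v \<equiv> b * c / ((1 - a) * (1 - \<delta>)) + e / (1 - \<delta>)"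
  shows "a * u + b = u" and "c * u + \<delta> * v + e = v"
proof -
  have "1 - a \<noteq> 0" "1 - \<delta> \<noteq> 0"
    using assms(1,2) by auto
  then show "a * u + b = u"
    unfolding u_def by (simp add: field_simps)
  have "v = (c * u + e) / (1 - \<delta>)"
    unfolding u_def v_def by (simp add: add_divide_distrib)
  with \<open>1 - \<delta> \<noteq> 0\<close> show "c * u + \<delta> * v + e = v"
    by (simp add: field_simps)
qed

lemma fimap_figamma:
  assumes "fia n x k \<noteq> 1" "d k \<noteq> 1"
  shows "fimap n x y d k (figamma n x y d k) = figamma n x y d k"
  using affine_fixpoint[OF assms] unfolding fimap_def figamma_def by simp

lemma wdist_figamma_le_fiM:
  assumes "i \<in> {1..n}" "j \<in> {1..n}"
  shows "wdist (fitheta n x y d) (figamma n x y d i) (figamma n x y d j) \<le> fiM n x y d"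
  unfolding fiM_def
proof (rule Max_ge)
  show "wdist (fitheta n x y d) (figamma n x y d i) (figamma n x y d j)
          \<in> (\<lambda>(i, j). \<bar>fib n x i / (1 - fia n x i) - fib n x j / (1 - fia n x j)\<bar>
              + fitheta n x y d *
                \<bar>fic n x y d i * fib n x i / ((1 - fia n x i) * (1 - d i)) + fie n x y d i / (1 - d i)
                 - fic n x y d j * fib n x j / ((1 - fia n x j) * (1 - d j)) - fie n x y d j / (1 - d j)\<bar>)
             ` ({1..n} \<times> {1..n})"
    using assms unfolding wdist_def figamma_def
    by (intro image_eqI[of _ _ "(i, j)"]) (auto simp: ac_simps diff_diff_eq)
qed simp

lemma lift_Suc_mono_less_upto:
  fixes x :: "nat \<Rightarrow> 'a::order"
  assumes "\<forall>k<n. x k < x (Suc k)" "i < j" "j \<le> n"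
  shows "x i < x j"
  using assms(2,3)
proof (induction j)
  case (Suc j)
  moreover have "x j < x (Suc j)"
    using assms(1) Suc.prems by simp
  ultimately show ?case by (cases "i = j") auto
qed simp

lemma fia_bounds:
  assumes n2: "2 \<le> n" and xinc: "\<forall>k<n. x k < x (Suc k)" and k: "k \<in> {1..n}"
  shows "0 < fia n x k \<and> fia n x k < 1"
proof -
  note less = lift_Suc_mono_less_upto[OF xinc]
  have "x (k - 1) < x k" "x 0 < x n"
    using less n2 k by auto
  moreover have "x k - x (k - 1) < x n - x 0"
  proof (cases "k = 1")
    case True
    then show ?thesis using less[of 1 n] n2 by simp
  next
    case False
    then have "0 < k - 1"
      using k by simp
    then have "x 0 < x (k - 1)"
      using less k by simp
    moreover have "x k \<le> x n"
      using less[of k n] k by (cases "k = n") auto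
    ultimately show ?thesis by simp
  qed
  ultimately show ?thesis unfolding fia_def by (simp add: divide_simps)
qed

lemma fitheta_bounds:
  assumes "1 \<le> n" and fia_01: "\<forall>k\<in>{1..n}. 0 < fia n x k \<and> fia n x k < 1"
  shows "0 < fitheta n x y d \<and> (\<forall>k\<in>{1..n}. fia n x k + fitheta n x y d * \<bar>fic n x y d k\<bar> < 1)"
proof (cases "\<forall>k\<in>{1..n}. fic n x y d k = 0")
  case True
  then show ?thesis using fia_01 by (simp add: fitheta_def)
next
  case False
  define A C where "A = Max (fia n x ` {1..n})" and "C = Max ((\<lambda>k. \<bar>fic n x y d k\<bar>) ` {1..n})"
  have \<theta>: "fitheta n x y d = (1 - A) / (2 * C)"
    unfolding fitheta_def A_def C_def using False by (rule if_not_P)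
  have A_ge: "fia n x k \<le> A" and C_ge: "\<bar>fic n x y d k\<bar> \<le> C" if "k \<in> {1..n}" for k
    unfolding A_def C_def using that by (auto intro: Max_ge)
  have "A \<in> fia n x ` {1..n}"
    unfolding A_def using assms(1) by (intro Max_in) auto
  then have "A < 1" using fia_01 by auto
  obtain k0 where "k0 \<in> {1..n}" "fic n x y d k0 \<noteq> 0"
    using False by blast
  then have "0 < C" using C_ge[of k0] by linarith
  have "fia n x k + fitheta n x y d * \<bar>fic n x y d k\<bar> < 1" if "k \<in> {1..n}" for k
  proof -
    have "fitheta n x y d * \<bar>fic n x y d k\<bar> \<le> (1 - A) / (2 * C) * C"
      unfolding \<theta> using C_ge[OF that] \<open>A < 1\<close> \<open>0 < C\<close> by (intro mult_left_mono) auto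
    also have "\<dots> = (1 - A) / 2"
      using \<open>0 < C\<close> by simp
    also have "\<dots> < 1 - A"
      using \<open>A < 1\<close> by simp
    finally show ?thesis using A_ge[OF that] \<open>A < 1\<close> by linarith
  qed
  moreover have "0 < fitheta n x y d"
    using \<theta> \<open>A < 1\<close> \<open>0 < C\<close> by simp
  ultimately show ?thesis by blast
qed

lemma fitheta_pos:
  assumes n2: "2 \<le> n" and xinc: "\<forall>k<n. x k < x (Suc k)"
  shows "0 < fitheta n x y d"
  using fitheta_bounds fia_bounds[OF n2 xinc] n2 by simp

lemma fimap_contraction:
  assumes n2: "2 \<le> n" and xinc: "\<forall>k<n. x k < x (Suc k)" and d_bounds: "\<forall>k\<in>{1..n}. 0 \<le> d k \<and> d k < 1"
    and k: "k \<in> {1..n}"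
  shows "0 \<le> fis n x y d k" "fis n x y d k < 1"
    and "wdist (fitheta n x y d) (fimap n x y d k p) (fimap n x y d k q)
           \<le> fis n x y d k * wdist (fitheta n x y d) p q"
    and "fimap n x y d k (figamma n x y d k) = figamma n x y d k"
proof -
  have fia: "0 < fia n x k \<and> fia n x k < 1"
    using fia_bounds[OF n2 xinc k] .
  have d: "0 \<le> d k" "d k < 1"
    using d_bounds k by auto
  have \<theta>: "0 < fitheta n x y d \<and> fia n x k + fitheta n x y d * \<bar>fic n x y d k\<bar> < 1"
    using fitheta_bounds fia_bounds[OF n2 xinc] n2 k by simp
  show "0 \<le> fis n x y d k" "fis n x y d k < 1"
    unfolding fis_def using fia \<theta> d by (auto simp: le_max_iff_disj)
  show "wdist (fitheta n x y d) (fimap n x y d k p) (fimap n x y d k q)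
          \<le> fis n x y d k * wdist (fitheta n x y d) p q"
    unfolding fis_def using fimap_lipschitz fia \<theta> d by simp
  show "fimap n x y d k (figamma n x y d k) = figamma n x y d k"
    using fia d by (intro fimap_figamma) auto
qed

lemma graph_farthest_point:
  fixes f :: "real \<Rightarrow> real"
  assumes "continuous_on {a..b} f" "a \<le> b"
  shows "\<exists>p\<in>(\<lambda>t. (t, f t)) ` {a..b}. \<forall>q\<in>(\<lambda>t. (t, f t)) ` {a..b}. wdist \<theta> g q \<le> wdist \<theta> g p"
proof -
  have "continuous_on {a..b} (\<lambda>t. wdist \<theta> g (t, f t))"
    unfolding wdist_def by (intro continuous_intros assms(1))
  moreover have "{a..b} \<noteq> {}"
    using assms(2) by simp
  ultimately show ?thesis
    using continuous_attains_sup[OF compact_Icc] by blast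
qed

lemma permutes_image_butlast:
  fixes \<sigma> :: "nat \<Rightarrow> nat"
  assumes "\<sigma> permutes {1..n}"
  shows "\<sigma> ` {1..n - 1} = {1..n} - {\<sigma> n}"
proof -
  have "{1..n - 1} = {1..n} - {n}" by auto
  then show ?thesis
    using image_set_diff[OF permutes_inj[OF assms]] permutes_image[OF assms] by simp
qed

lemma permutes_sorted_le_last:
  fixes \<sigma> :: "nat \<Rightarrow> nat"
  assumes "\<sigma> permutes {1..n}" "\<forall>i j. 1 \<le> i \<and> i \<le> j \<and> j \<le> n \<longrightarrow> s (\<sigma> i) \<le> s (\<sigma> j)"
    and "k \<in> {1..n}"
  shows "s k \<le> s (\<sigma> n)"
proof -
  obtain j where "j \<in> {1..n}" "k = \<sigma> j"
    using permutes_image[OF assms(1)] assms(3) by blast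
  then show ?thesis using assms(2) by auto
qed

lemma permutes_sorted_le_penultimate:
  fixes \<sigma> :: "nat \<Rightarrow> nat"
  assumes "\<sigma> permutes {1..n}" "\<forall>i j. 1 \<le> i \<and> i \<le> j \<and> j \<le> n \<longrightarrow> s (\<sigma> i) \<le> s (\<sigma> j)"
    and "k \<in> {1..n} - {\<sigma> n}"
  shows "s k \<le> s (\<sigma> (n - 1))"
proof -
  obtain j where "j \<in> {1..n - 1}" "k = \<sigma> j"
    using permutes_image_butlast[OF assms(1)] assms(3) by blast
  then show ?thesis using assms(2) by auto
qed

theorem theorem3p1:
  fixes n :: nat and x y d :: "nat \<Rightarrow> real" and f :: "real \<Rightarrow> real" and \<sigma> :: "nat \<Rightarrow> nat"
  assumes n2: "n \<ge> 2"
    and xinc: "\<forall>k<n. x k < x (Suc k)"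
    and drange: "\<forall>k\<in>{1..n}. 0 \<le> d k \<and> d k < 1"
    and fcont: "continuous_on {x 0..x n} f"
    and finterp: "\<forall>k\<le>n. f (x k) = y k"
    and fattr: "(\<lambda>t. (t, f t)) ` {x 0..x n}
                  = (\<Union>k\<in>{1..n}. fimap n x y d k ` ((\<lambda>t. (t, f t)) ` {x 0..x n}))"
    and sperm: "\<sigma> permutes {1..n}"
    and ssort: "\<forall>i j. 1 \<le> i \<and> i \<le> j \<and> j \<le> n \<longrightarrow> fis n x y d (\<sigma> i) \<le> fis n x y d (\<sigma> j)"
  shows "(\<lambda>t. (t, f t)) ` {x 0..x n}
    \<subseteq> (\<Union>j\<in>{1..n-1}. rball (fitheta n x y d) (figamma n x y d (\<sigma> j))
           (fiM n x y d * fis n x y d (\<sigma> j) * (1 + fis n x y d (\<sigma> n))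
             / (1 - fis n x y d (\<sigma> (n-1)) * fis n x y d (\<sigma> n))))
      \<union> rball (fitheta n x y d) (figamma n x y d (\<sigma> n))
           (fiM n x y d * fis n x y d (\<sigma> n) * (1 + fis n x y d (\<sigma> (n-1)))
             / (1 - fis n x y d (\<sigma> (n-1)) * fis n x y d (\<sigma> n)))"
proof -
  let ?K = "(\<lambda>t. (t, f t)) ` {x 0..x n}" and ?\<theta> = "fitheta n x y d" and ?\<gamma> = "figamma n x y d"
    and ?s = "fis n x y d" and ?M = "fiM n x y d"
  have "0 < ?\<theta>"
    using fitheta_pos[OF n2 xinc] .
  have "x 0 \<le> x n"
    using lift_Suc_mono_less_upto[OF xinc, of 0 n] n2 by simp
  have "\<sigma> (n - 1) \<in> \<sigma> ` {1..n - 1}"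
    using n2 by simp
  then have top_two: "\<sigma> n \<in> {1..n}" "\<sigma> (n - 1) \<in> {1..n} - {\<sigma> n}"
    unfolding permutes_image_butlast[OF sperm] using permutes_in_image[OF sperm, of n] n2 by auto
  have farthest: "\<forall>k\<in>{1..n}. \<exists>p\<in>?K. \<forall>q\<in>?K. wdist ?\<theta> (?\<gamma> k) q \<le> wdist ?\<theta> (?\<gamma> k) p"
    using graph_farthest_point[OF fcont \<open>x 0 \<le> x n\<close>] by blast
  note contraction = fimap_contraction[OF n2 xinc drange]
  note sorted = permutes_sorted_le_last[OF sperm ssort] permutes_sorted_le_penultimate[OF sperm ssort]
  have "?K \<subseteq> (\<Union>k\<in>{1..n} - {\<sigma> n}.
              rball ?\<theta> (?\<gamma> k) (?M * ?s k * (1 + ?s (\<sigma> n)) / (1 - ?s (\<sigma> (n-1)) * ?s (\<sigma> n))))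
      \<union> rball ?\<theta> (?\<gamma> (\<sigma> n)) (?M * ?s (\<sigma> n) * (1 + ?s (\<sigma> (n-1))) / (1 - ?s (\<sigma> (n-1)) * ?s (\<sigma> n)))"
    unfolding rball_eq_wdist
    by (rule attractor_subset_fixpoint_balls[where \<rho> = "wdist ?\<theta>" and F = "fimap n x y d"
          and \<gamma> = ?\<gamma> and s = ?s])
      (use fattr top_two farthest contraction sorted \<open>0 < ?\<theta>\<close>
        in \<open>auto simp: wdist_nonneg wdist_triangle wdist_figamma_le_fiM\<close>)
  then show ?thesis
    unfolding permutes_image_butlast[OF sperm, symmetric] by (simp add: image_image)
qed

end
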